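(* Let $K$ be a field of characteristic $0$, let $G$ be a finite group, let $\alpha$ be a one-dimensional character of $G$, and let $M$ be a monomial $G$-module given by a basis $(v_i)_{i\in I}$, an action of $G$ on $I$, and maps $\gamma_i\colon G\to K\setminus\{0\}$ with $\gamma_i(gh)=\gamma_{hi}(g)\gamma_i(h)$ and $gv_i=\gamma_i(g)v_{gi}$. Let $I^*$ be a system of distinct representatives of all $G$-orbits in $I$, and for each $i\in I^*$ let $G^{(i)}$ be a left transversal of the stabilizer $G_i$ in $G$. Let $I(M,\alpha)$ be the set of $i\in I$ such that $\gamma_i$ and $\alpha^{-1}$ coincide on $G_i$, and put $J(M,\alpha)=I^*\cap I(M,\alpha)$, $J_0(M,\alpha)=I^*\setminus J(M,\alpha)$. Consider the families (A) $v_i-\alpha(g)\gamma_i(g)v_{gi}$, for $i\in I^*$, $g\in G^{(i)}$, $g\notin G_i$; (B) $v_i$, for $i\in J_0(M,\alpha)$. Then: (i) the union of the families (A) and (B) is a basis of ${}_\alpha M$; (ii) the family $a_\alpha(v_j)$, $j\in J(M,\alpha)$, is a basis of $M_\alpha$; (iii) the family $v_j \bmod {}_\alpha M$, $j\in J(M,\alpha)$, is a basis of the factor space $M/{}_\alpha M$.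
   Context: A one-dimensional character of $G$ is a homomorphism $G\to K^\times$. A monomial $G$-module structure on a $K$-linear space $M$ is given by a basis $(v_i)_{i\in I}$, an action of $G$ on $I$ and maps $\gamma_i\colon G\to K\setminus\{0\}$ with $\gamma_i(gh)=\gamma_{hi}(g)\gamma_i(h)$ for all $i,g,h$, the action on $M$ being $gv_i=\gamma_i(g)v_{gi}$. For a one-dimensional character $\alpha$ of $G$: $a_\alpha=|G|^{-1}\sum_{g\in G}\alpha(g)g\in KG$, acting on $M$ by $z\mapsto a_\alpha z$; ${}_\alpha M$ is the $G$-submodule of $M$ generated by all differences $\alpha^{-1}(g)z-gz$ with $g\in G$, $z\in M$; $M_\alpha$ is the $G$-submodule of all $z\in M$ with $gz=\alpha^{-1}(g)z$ for all $g\in G$. $G_i$ is the stabilizer of $i$ in $G$. *)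

theory Defs
  imports Complex_Main "HOL-Algebra.Group_Action"
begin

definition one_dim_char :: "('g, 'b) monoid_scheme \<Rightarrow> ('g \<Rightarrow> 'k::field) \<Rightarrow> bool" where
  "one_dim_char G \<alpha> \<longleftrightarrow>
     (\<forall>g\<in>carrier G. \<alpha> g \<noteq> 0) \<and>
     (\<forall>g\<in>carrier G. \<forall>h\<in>carrier G. \<alpha> (g \<otimes>\<^bsub>G\<^esub> h) = \<alpha> g * \<alpha> h)"

definition family_basis ::
  "('k::field \<Rightarrow> 'm::ab_group_add \<Rightarrow> 'm) \<Rightarrow> ('x \<Rightarrow> 'm) \<Rightarrow> 'x set \<Rightarrow> 'm set \<Rightarrow> bool" where
  "family_basis scale f S U \<longleftrightarrow>
     inj_on f S \<and> Modules.module.independent scale (f ` S) \<and> Modules.module.span scale (f ` S) = U"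

text \<open>The family (f s mod U), s in S, is a basis of the factor space UNIV / U
  (written out: linear independence modulo U and spanning modulo U).\<close>
definition family_basis_mod ::
  "('k::field \<Rightarrow> 'm::ab_group_add \<Rightarrow> 'm) \<Rightarrow> ('x \<Rightarrow> 'm) \<Rightarrow> 'x set \<Rightarrow> 'm set \<Rightarrow> bool" where
  "family_basis_mod scale f S U \<longleftrightarrow>
     (\<forall>T c. finite T \<longrightarrow> T \<subseteq> S \<longrightarrow> (\<Sum>t\<in>T. scale (c t) (f t)) \<in> U \<longrightarrow> (\<forall>t\<in>T. c t = 0)) \<and>
     (\<forall>z. \<exists>T c. finite T \<and> T \<subseteq> S \<and> z - (\<Sum>t\<in>T. scale (c t) (f t)) \<in> U)"

definition gsubmodule_gen ::
  "('g, 'b) monoid_scheme \<Rightarrow> ('k::field \<Rightarrow> 'm::ab_group_add \<Rightarrow> 'm) \<Rightarrow> ('g \<Rightarrow> 'm \<Rightarrow> 'm) \<Rightarrow> 'm set \<Rightarrow> 'm set" where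
  "gsubmodule_gen G scale act S =
     \<Inter>{U. Modules.module.subspace scale U \<and> (\<forall>g\<in>carrier G. \<forall>u\<in>U. act g u \<in> U) \<and> S \<subseteq> U}"

definition alpha_sub ::
  "('g, 'b) monoid_scheme \<Rightarrow> ('k::field \<Rightarrow> 'm::ab_group_add \<Rightarrow> 'm) \<Rightarrow> ('g \<Rightarrow> 'm \<Rightarrow> 'm) \<Rightarrow> ('g \<Rightarrow> 'k) \<Rightarrow> 'm set" where
  "alpha_sub G scale act \<alpha> =
     gsubmodule_gen G scale act {scale (inverse (\<alpha> g)) z - act g z | g z. g \<in> carrier G}"

definition alpha_fix ::
  "('g, 'b) monoid_scheme \<Rightarrow> ('k::field \<Rightarrow> 'm::ab_group_add \<Rightarrow> 'm) \<Rightarrow> ('g \<Rightarrow> 'm \<Rightarrow> 'm) \<Rightarrow> ('g \<Rightarrow> 'k) \<Rightarrow> 'm set" where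
  "alpha_fix G scale act \<alpha> = {z. \<forall>g\<in>carrier G. act g z = scale (inverse (\<alpha> g)) z}"

definition a_op ::
  "('g, 'b) monoid_scheme \<Rightarrow> ('k::field \<Rightarrow> 'm::ab_group_add \<Rightarrow> 'm) \<Rightarrow> ('g \<Rightarrow> 'm \<Rightarrow> 'm) \<Rightarrow> ('g \<Rightarrow> 'k) \<Rightarrow> 'm \<Rightarrow> 'm" where
  "a_op G scale act \<alpha> z = scale (inverse (of_nat (card (carrier G))))
      (\<Sum>g\<in>carrier G. scale (\<alpha> g) (act g z))"

definition I_set ::
  "('g, 'b) monoid_scheme \<Rightarrow> 'i set \<Rightarrow> ('g \<Rightarrow> 'i \<Rightarrow> 'i) \<Rightarrow> ('i \<Rightarrow> 'g \<Rightarrow> 'k::field) \<Rightarrow> ('g \<Rightarrow> 'k) \<Rightarrow> 'i set" where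
  "I_set G I \<phi> \<gamma> \<alpha> = {i\<in>I. \<forall>g\<in>stabilizer G \<phi> i. \<gamma> i g = inverse (\<alpha> g)}"

end

theory Submission
  imports Defs
begin

(* The vectors v_i - alpha(g) gamma_i(g) v_(g i) for i in I*, g in G^(i) - G_i, together with the
   v_i for i in I*, arise from the basis (v_k) by a unitriangular substitution: the map
   (i, g) |-> g i is a bijection onto I - I*. Hence they form a basis of M. The vectors of
   families (A) and (B) lie in _alpha M. The averaging operator a_alpha is linear, vanishes on
   _alpha M, maps M onto M_alpha and fixes M_alpha; moreover for j in J and j' in I* the
   v_j-coordinate of a_alpha v_j' is |G_j| / |G| if j' = j and 0 otherwise, so the a_alpha v_j are
   linearly independent. Applying a_alpha to a decomposition z = x + sum_j d_j v_j with x in the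
   span of (A) and (B) yields all three assertions. *)

context vector_space
begin

lemma inj_on_independent_imageI:
  assumes "\<And>S c. finite S \<Longrightarrow> S \<subseteq> X \<Longrightarrow> (\<Sum>x\<in>S. c x *s f x) = 0 \<Longrightarrow> \<forall>x\<in>S. c x = 0"
  shows "inj_on f X \<and> independent (f ` X)"
proof
  show "inj_on f X"
  proof (rule inj_onI, rule ccontr)
    fix x y assume xy: "x \<in> X" "y \<in> X" "f x = f y" "x \<noteq> y"
    have "(\<Sum>z\<in>{x, y}. (if z = x then 1 else - 1) *s f z) = 0" using xy by simp
    with xy show False
      using assms[of "{x, y}" "\<lambda>z. if z = x then 1 else - 1"] by auto
  qed
  show "independent (f ` X)"
    unfolding independent_explicit_finite_subsets
  proof (intro allI impI ballI)
    fix U u b assume U: "U \<subseteq> f ` X" "finite U" and sum: "(\<Sum>w\<in>U. u w *s w) = 0" and b: "b \<in> U"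
    obtain S where S: "S \<subseteq> X" "inj_on f S" "U = f ` S"
      using subset_image_inj[THEN iffD1, OF U(1)] by blast
    have "finite S" using S U finite_image_iff by (metis (no_types))
    moreover have "(\<Sum>x\<in>S. u (f x) *s f x) = 0" using sum S by (simp add: sum.reindex)
    ultimately have "\<forall>x\<in>S. u (f x) = 0" by (rule assms[OF _ S(1)])
    then show "u b = 0" using S(3) b by blast
  qed
qed

lemma span_image_explicit:
  assumes "y \<in> span (f ` X)"
  obtains S c where "finite S" "S \<subseteq> X" "y = (\<Sum>x\<in>S. c x *s f x)"
proof -
  obtain U r where U: "finite U" "U \<subseteq> f ` X" "y = (\<Sum>w\<in>U. r w *s w)"
    using assms unfolding span_explicit by blast
  obtain S where S: "S \<subseteq> X" "inj_on f S" "U = f ` S"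
    using subset_image_inj[THEN iffD1, OF U(2)] by blast
  have "finite S" using S U finite_image_iff by (metis (no_types))
  moreover have "y = (\<Sum>x\<in>S. r (f x) *s f x)" using U S by (simp add: sum.reindex)
  ultimately show thesis by (rule that[OF _ S(1)])
qed

lemma linear_functional_sum_scale:
  assumes "Vector_Spaces.linear scale (*) \<theta>"
  shows "\<theta> (\<Sum>x\<in>S. c x *s f x) = (\<Sum>x\<in>S. c x * \<theta> (f x))"
proof -
  interpret \<theta>: Vector_Spaces.linear scale "(*)" \<theta> by fact
  show ?thesis by (simp add: \<theta>.sum \<theta>.scale)
qed

lemma coefficient_eq_0_by_functional:
  assumes \<theta>: "Vector_Spaces.linear scale (*) \<theta>"
    and S: "finite S" "s \<in> S" and sum: "(\<Sum>x\<in>S. c x *s f x) = 0"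
    and "\<theta> (f s) \<noteq> 0" and others: "\<And>x. x \<in> S \<Longrightarrow> x \<noteq> s \<Longrightarrow> c x * \<theta> (f x) = 0"
  shows "c s = 0"
proof -
  interpret \<theta>: Vector_Spaces.linear scale "(*)" \<theta> by fact
  have "0 = \<theta> (\<Sum>x\<in>S. c x *s f x)"
    using sum by (simp add: \<theta>.zero)
  also have "\<dots> = (\<Sum>x\<in>S. c x * \<theta> (f x))"
    by (rule linear_functional_sum_scale[OF \<theta>])
  also have "\<dots> = c s * \<theta> (f s)"
    using S others by (simp add: sum.remove sum.neutral)
  finally show ?thesis using \<open>\<theta> (f s) \<noteq> 0\<close> by simp
qed

lemma linear_representation_family_basis:
  assumes "family_basis scale v I UNIV"
  shows "Vector_Spaces.linear scale (*) (\<lambda>z. representation (v ` I) z (v k))"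
  using assms linear_representation by (simp add: family_basis_def)

lemma representation_family_basis:
  assumes "family_basis scale v I UNIV" "i \<in> I" "k \<in> I"
  shows "representation (v ` I) (v i) (v k) = (if i = k then 1 else 0)"
  using assms representation_basis[of "v ` I"] inj_on_eq_iff[of v I]
  by (simp add: family_basis_def)

lemma unitriangular_Inl_coefficient_eq_0:
  assumes v: "family_basis scale v I UNIV" and I0: "I0 \<subseteq> I"
    and \<sigma>: "\<sigma> ` X \<subseteq> I0" and \<tau>: "inj_on \<tau> X" "\<tau> ` X \<subseteq> I - I0"
    and c: "\<And>x. x \<in> X \<Longrightarrow> c x \<noteq> 0"
    and S: "finite S" "S \<subseteq> Inl ` X \<union> Inr ` I0"
    and sum: "(\<Sum>y\<in>S. d y *s case_sum (\<lambda>x. v (\<sigma> x) - c x *s v (\<tau> x)) v y) = 0"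
    and x: "Inl x \<in> S"
  shows "d (Inl x) = 0"
proof -
  define coord where "coord z = representation (v ` I) z (v (\<tau> x))" for z
  have x: "x \<in> X" using x S(2) by auto
  have \<sigma>I: "\<sigma> y \<in> I0" "\<sigma> y \<in> I" and \<tau>I: "\<tau> y \<in> I" "\<tau> y \<notin> I0" if "y \<in> X" for y
    using that \<sigma> \<tau>(2) I0 by auto
  have coord_v: "coord (v i) = (if i = \<tau> x then 1 else 0)" if "i \<in> I" for i
    unfolding coord_def using representation_family_basis[OF v that \<tau>I(1)[OF x]] .
  have coord_Inl: "coord (v (\<sigma> y) - c y *s v (\<tau> y)) =
      (if \<sigma> y = \<tau> x then 1 else 0) - c y * (if \<tau> y = \<tau> x then 1 else 0)" if "y \<in> X" for y
    using that x \<sigma>I \<tau>I coord_v v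
    by (simp add: coord_def representation_diff representation_scale family_basis_def)
  show ?thesis
  proof (rule coefficient_eq_0_by_functional[OF _ S(1) \<open>Inl x \<in> S\<close> sum])
    show "Vector_Spaces.linear scale (*) coord"
      unfolding coord_def by (rule linear_representation_family_basis[OF v])
    have "\<sigma> x \<noteq> \<tau> x" using x \<sigma>I \<tau>I by metis
    then show "coord (case_sum (\<lambda>x. v (\<sigma> x) - c x *s v (\<tau> x)) v (Inl x)) \<noteq> 0"
      using x by (simp add: coord_Inl c)
    fix y assume y: "y \<in> S" "y \<noteq> Inl x"
    show "d y * coord (case_sum (\<lambda>x. v (\<sigma> x) - c x *s v (\<tau> x)) v y) = 0"
    proof (cases y)
      case (Inl x')
      with y S(2) have "x' \<in> X" "x' \<noteq> x" by auto
      then have "\<tau> x' \<noteq> \<tau> x" "\<sigma> x' \<noteq> \<tau> x"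
        using x \<tau>(1) \<sigma>I \<tau>I by (metis inj_on_eq_iff)+
      then show ?thesis using Inl \<open>x' \<in> X\<close> by (simp add: coord_Inl)
    next
      case (Inr i)
      with y S(2) have "i \<in> I0" by auto
      then have "i \<noteq> \<tau> x" using x \<tau>I by metis
      then show ?thesis using Inr \<open>i \<in> I0\<close> I0 by (simp add: coord_v subsetD)
    qed
  qed
qed

lemma independent_unitriangular:
  assumes v: "family_basis scale v I UNIV" and I0: "I0 \<subseteq> I"
    and \<sigma>: "\<sigma> ` X \<subseteq> I0" and \<tau>: "inj_on \<tau> X" "\<tau> ` X \<subseteq> I - I0"
    and c: "\<And>x. x \<in> X \<Longrightarrow> c x \<noteq> 0"
  shows "inj_on (case_sum (\<lambda>x. v (\<sigma> x) - c x *s v (\<tau> x)) v) (Inl ` X \<union> Inr ` I0) \<and>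
    independent (case_sum (\<lambda>x. v (\<sigma> x) - c x *s v (\<tau> x)) v ` (Inl ` X \<union> Inr ` I0))"
proof (rule inj_on_independent_imageI)
  let ?e = "case_sum (\<lambda>x. v (\<sigma> x) - c x *s v (\<tau> x)) v"
  fix S d assume S: "finite S" "S \<subseteq> Inl ` X \<union> Inr ` I0" and sum: "(\<Sum>y\<in>S. d y *s ?e y) = 0"
  note Inl_zero = unitriangular_Inl_coefficient_eq_0[OF assms S sum]
  \<comment> \<open>Once the coefficients of the \<open>Inl\<close> terms vanish, the \<open>v i\<close>-coordinate sees only \<open>Inr i\<close>.\<close>
  have Inr_zero: "d (Inr i) = 0" if i: "Inr i \<in> S" for i
  proof (rule coefficient_eq_0_by_functional[OF _ S(1) i sum])
    let ?coord = "\<lambda>z. representation (v ` I) z (v i)"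
    show "Vector_Spaces.linear scale (*) ?coord"
      by (rule linear_representation_family_basis[OF v])
    have i: "i \<in> I" using i S(2) I0 by auto
    then show "?coord (?e (Inr i)) \<noteq> 0" by (simp add: representation_family_basis[OF v])
    fix y assume y: "y \<in> S" "y \<noteq> Inr i"
    show "d y * ?coord (?e y) = 0"
    proof (cases y)
      case (Inl x)
      then show ?thesis using y Inl_zero by simp
    next
      case (Inr i')
      with y S(2) I0 have "i' \<in> I" "i' \<noteq> i" by auto
      then show ?thesis using Inr i by (simp add: representation_family_basis[OF v])
    qed
  qed
  show "\<forall>y\<in>S. d y = 0"
  proof
    fix y assume "y \<in> S"
    then show "d y = 0" using Inl_zero Inr_zero by (cases y) simp_all
  qed
qed

lemma span_unitriangular:
  assumes v: "span (v ` I) = UNIV" and \<sigma>: "\<sigma> ` X \<subseteq> I0" and \<tau>: "I \<subseteq> I0 \<union> \<tau> ` X"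
    and c: "\<And>x. x \<in> X \<Longrightarrow> c x \<noteq> 0"
  shows "span (case_sum (\<lambda>x. v (\<sigma> x) - c x *s v (\<tau> x)) v ` (Inl ` X \<union> Inr ` I0)) = UNIV"
proof -
  let ?S = "span (case_sum (\<lambda>x. v (\<sigma> x) - c x *s v (\<tau> x)) v ` (Inl ` X \<union> Inr ` I0))"
  have "v i \<in> ?S" if i: "i \<in> I" for i
  proof (cases "i \<in> I0")
    case True
    then show ?thesis by (intro span_base) force
  next
    case False
    then obtain x where x: "x \<in> X" "i = \<tau> x" using i \<tau> by blast
    have "v (\<sigma> x) - (v (\<sigma> x) - c x *s v (\<tau> x)) \<in> ?S"
      using x \<sigma> by (intro span_diff span_base) force+
    then have "inverse (c x) *s (v (\<sigma> x) - (v (\<sigma> x) - c x *s v (\<tau> x))) \<in> ?S"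
      by (rule span_scale)
    then show ?thesis using x c by simp
  qed
  then have "span (v ` I) \<subseteq> ?S" by (intro span_minimal) auto
  then show ?thesis using v by auto
qed

lemma family_basis_unitriangular:
  assumes v: "family_basis scale v I UNIV" and "I0 \<subseteq> I"
    and "\<sigma> ` X \<subseteq> I0" and \<tau>: "bij_betw \<tau> X (I - I0)" and "\<And>x. x \<in> X \<Longrightarrow> c x \<noteq> 0"
  shows "family_basis scale (case_sum (\<lambda>x. v (\<sigma> x) - c x *s v (\<tau> x)) v) (Inl ` X \<union> Inr ` I0) UNIV"
proof -
  have "inj_on \<tau> X" "\<tau> ` X = I - I0"
    using \<tau> by (auto simp: bij_betw_def)
  moreover have "span (v ` I) = UNIV" using v by (simp add: family_basis_def)
  ultimately show ?thesis
    using independent_unitriangular[OF assms(1-3)] span_unitriangular[of v I \<sigma> X I0 \<tau> c] assms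
    by (auto simp: family_basis_def)
qed

lemma span_Un_image_decompose:
  assumes "z \<in> span (B \<union> w ` J)"
  obtains x S d where "x \<in> span B" "finite S" "S \<subseteq> J" "z = x + (\<Sum>j\<in>S. d j *s w j)"
proof -
  obtain x y where xy: "x \<in> span B" "y \<in> span (w ` J)" "z = x + y"
    using assms unfolding span_Un by blast
  obtain S d where "finite S" "S \<subseteq> J" "y = (\<Sum>j\<in>S. d j *s w j)"
    using span_image_explicit[OF xy(2)] .
  then show thesis using that xy by blast
qed

lemma basis_mod_if_annihilated:
  assumes spanning: "span (B \<union> w ` J) = UNIV" and B: "B \<subseteq> A" and A: "subspace A"
    and p: "Vector_Spaces.linear scale scale p" and p_A: "\<And>a. a \<in> A \<Longrightarrow> p a = 0"
    and indep: "\<And>S c. finite S \<Longrightarrow> S \<subseteq> J \<Longrightarrow> (\<Sum>j\<in>S. c j *s p (w j)) = 0 \<Longrightarrow> \<forall>j\<in>S. c j = 0"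
  shows "span B = A" and "family_basis_mod scale w J A"
proof -
  interpret p: Vector_Spaces.linear scale scale p by fact
  have span_B: "span B \<subseteq> A" using B A by (rule span_minimal)
  have comb_in_A: "c j = 0"
    if "finite S" "S \<subseteq> J" "(\<Sum>j\<in>S. c j *s w j) \<in> A" "j \<in> S" for S c j
    using indep[OF that(1,2)] p_A[OF that(3)] that(4) by (simp add: p.sum p.scale)
  show "span B = A"
  proof (rule antisym[OF span_B], rule subsetI)
    fix z assume "z \<in> A"
    obtain x S d where d: "x \<in> span B" "finite S" "S \<subseteq> J" "z = x + (\<Sum>j\<in>S. d j *s w j)"
      using span_Un_image_decompose spanning by blast
    have in_A: "(\<Sum>j\<in>S. d j *s w j) \<in> A"
      using subspace_diff[OF A \<open>z \<in> A\<close>, of x] span_B d by auto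
    have "(\<Sum>j\<in>S. d j *s w j) = 0" using comb_in_A[OF d(2,3) in_A] by simp
    then show "z \<in> span B" using d by simp
  qed
  show "family_basis_mod scale w J A"
    unfolding family_basis_mod_def
  proof (intro conjI allI impI)
    fix S c assume "finite S" "S \<subseteq> J" "(\<Sum>j\<in>S. c j *s w j) \<in> A"
    then show "\<forall>j\<in>S. c j = 0" using comb_in_A by blast
  next
    fix z
    obtain x S d where d: "x \<in> span B" "finite S" "S \<subseteq> J" "z = x + (\<Sum>j\<in>S. d j *s w j)"
      using span_Un_image_decompose spanning by blast
    then have "z - (\<Sum>j\<in>S. d j *s w j) \<in> A" using span_B by auto
    then show "\<exists>S d. finite S \<and> S \<subseteq> J \<and> z - (\<Sum>j\<in>S. d j *s w j) \<in> A"
      using d(2,3) by blast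
  qed
qed

lemma family_basis_projection_image:
  assumes spanning: "span (B \<union> w ` J) = UNIV"
    and p: "Vector_Spaces.linear scale scale p" and p_B: "\<And>b. b \<in> B \<Longrightarrow> p b = 0"
    and F: "subspace F" and p_F: "\<And>z. p z \<in> F" and p_id: "\<And>z. z \<in> F \<Longrightarrow> p z = z"
    and indep: "\<And>S c. finite S \<Longrightarrow> S \<subseteq> J \<Longrightarrow> (\<Sum>j\<in>S. c j *s p (w j)) = 0 \<Longrightarrow> \<forall>j\<in>S. c j = 0"
  shows "family_basis scale (\<lambda>j. p (w j)) J F"
proof -
  interpret p: Vector_Spaces.linear scale scale p by fact
  have "span ((\<lambda>j. p (w j)) ` J) = F"
  proof
    show "span ((\<lambda>j. p (w j)) ` J) \<subseteq> F"
      using p_F F by (intro span_minimal) auto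
    show "F \<subseteq> span ((\<lambda>j. p (w j)) ` J)"
    proof
      fix z assume "z \<in> F"
      obtain x S d where d: "x \<in> span B" "finite S" "S \<subseteq> J" "z = x + (\<Sum>j\<in>S. d j *s w j)"
        using span_Un_image_decompose spanning by blast
      have "p x = 0" using p.eq_0_on_span[OF p_B d(1)] by simp
      then have "z = (\<Sum>j\<in>S. d j *s p (w j))"
        using p_id[OF \<open>z \<in> F\<close>] d(4) by (simp add: p.add p.sum p.scale)
      also have "\<dots> \<in> span ((\<lambda>j. p (w j)) ` J)"
        using d(3) by (intro span_sum span_scale span_base) auto
      finally show "z \<in> span ((\<lambda>j. p (w j)) ` J)" .
    qed
  qed
  then show ?thesis
    using inj_on_independent_imageI[OF indep] by (simp add: family_basis_def)
qed

end

lemma (in group) sum_carrier_mult_left: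
  assumes "g \<in> carrier G"
  shows "(\<Sum>h\<in>carrier G. F (g \<otimes> h)) = (\<Sum>h\<in>carrier G. F h)"
  by (rule sum.reindex_bij_witness[where i="\<lambda>k. inv g \<otimes> k" and j="\<lambda>h. g \<otimes> h"])
     (use assms in \<open>auto simp: m_assoc[symmetric]\<close>)

lemma (in group) sum_carrier_mult_right:
  assumes "g \<in> carrier G"
  shows "(\<Sum>h\<in>carrier G. F (h \<otimes> g)) = (\<Sum>h\<in>carrier G. F h)"
  by (rule sum.reindex_bij_witness[where i="\<lambda>k. k \<otimes> inv g" and j="\<lambda>h. h \<otimes> g"])
     (use assms in \<open>auto simp: m_assoc\<close>)

locale linear_action = grp: group G + vs: vector_space scale
  for G :: "('g, 'b) monoid_scheme" (structure)
    and scale :: "'k::field \<Rightarrow> 'm::ab_group_add \<Rightarrow> 'm" (infixr \<open>*s\<close> 75) +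
  fixes act :: "'g \<Rightarrow> 'm \<Rightarrow> 'm"
  assumes act_linear: "g \<in> carrier G \<Longrightarrow> Vector_Spaces.linear scale scale (act g)"
    and act_mult: "g \<in> carrier G \<Longrightarrow> h \<in> carrier G \<Longrightarrow> act g (act h z) = act (g \<otimes> h) z"
begin

lemma act_module_hom: "g \<in> carrier G \<Longrightarrow> module_hom scale scale (act g)"
  using act_linear by (simp add: module_hom_iff_linear)

lemmas act_add = module_hom.add[OF act_module_hom]
  and act_scale = module_hom.scale[OF act_module_hom]
  and act_sum = module_hom.sum[OF act_module_hom]
  and act_zero = module_hom.zero[OF act_module_hom]

lemma subspace_alpha_sub: "vs.subspace (alpha_sub G scale act \<alpha>)"
  unfolding alpha_sub_def gsubmodule_gen_def by (rule vs.subspace_Inter) blast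

lemma alpha_sub_generator:
  "g \<in> carrier G \<Longrightarrow> inverse (\<alpha> g) *s z - act g z \<in> alpha_sub G scale act \<alpha>"
  unfolding alpha_sub_def gsubmodule_gen_def by blast

lemma subspace_alpha_fix: "vs.subspace (alpha_fix G scale act \<alpha>)"
  unfolding vs.subspace_def alpha_fix_def
  by (auto simp: act_zero act_add act_scale vs.scale_right_distrib mult.commute)

end

locale character_action = linear_action G scale act
  for G :: "('g, 'b) monoid_scheme" (structure)
    and scale :: "'k::field_char_0 \<Rightarrow> 'm::ab_group_add \<Rightarrow> 'm" (infixr \<open>*s\<close> 75)
    and act +
  fixes \<alpha> :: "'g \<Rightarrow> 'k"
  assumes finite_carrier: "finite (carrier G)" and character: "one_dim_char G \<alpha>"
begin

abbreviation a\<^sub>\<alpha> :: "'m \<Rightarrow> 'm" where "a\<^sub>\<alpha> \<equiv> a_op G scale act \<alpha>"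

lemma character_nonzero: "g \<in> carrier G \<Longrightarrow> \<alpha> g \<noteq> 0"
  using character unfolding one_dim_char_def by blast

lemma character_mult: "g \<in> carrier G \<Longrightarrow> h \<in> carrier G \<Longrightarrow> \<alpha> (g \<otimes> h) = \<alpha> g * \<alpha> h"
  using character unfolding one_dim_char_def by blast

lemma of_nat_card_carrier_nonzero: "(of_nat (card (carrier G)) :: 'k) \<noteq> 0"
  using finite_carrier grp.one_closed by (auto simp: card_eq_0_iff)

lemma a_op_linear: "Vector_Spaces.linear scale scale a\<^sub>\<alpha>"
proof -
  have "a\<^sub>\<alpha> (x + y) = a\<^sub>\<alpha> x + a\<^sub>\<alpha> y" for x y
    by (simp add: a_op_def act_add vs.scale_right_distrib sum.distrib)
  moreover have "a\<^sub>\<alpha> (c *s x) = c *s a\<^sub>\<alpha> x" for c x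
    by (simp add: a_op_def act_scale vs.scale_sum_right ac_simps)
  ultimately show ?thesis
    by (simp add: Vector_Spaces.linear_def module_hom_def module_hom_axioms_def
        module_iff_vector_space vs.vector_space_axioms)
qed

lemma a_op_act:
  assumes g: "g \<in> carrier G"
  shows "a\<^sub>\<alpha> (act g z) = inverse (\<alpha> g) *s a\<^sub>\<alpha> z"
proof -
  have "(\<Sum>h\<in>carrier G. \<alpha> h *s act h (act g z))
      = (\<Sum>h\<in>carrier G. inverse (\<alpha> g) *s (\<alpha> (h \<otimes> g) *s act (h \<otimes> g) z))"
  proof (rule sum.cong)
    fix h assume h: "h \<in> carrier G"
    have "\<alpha> h = inverse (\<alpha> g) * \<alpha> (h \<otimes> g)"
      using character_mult[OF h g] character_nonzero[OF g] by simp
    then show "\<alpha> h *s act h (act g z) = inverse (\<alpha> g) *s (\<alpha> (h \<otimes> g) *s act (h \<otimes> g) z)"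
      using act_mult[OF h g] by simp
  qed simp
  also have "\<dots> = inverse (\<alpha> g) *s (\<Sum>h\<in>carrier G. \<alpha> (h \<otimes> g) *s act (h \<otimes> g) z)"
    by (rule vs.scale_sum_right[symmetric])
  also have "\<dots> = inverse (\<alpha> g) *s (\<Sum>h\<in>carrier G. \<alpha> h *s act h z)"
    using grp.sum_carrier_mult_right[OF g, of "\<lambda>k. \<alpha> k *s act k z"] by simp
  finally show ?thesis by (simp add: a_op_def mult.commute)
qed

lemma act_a_op:
  assumes g: "g \<in> carrier G"
  shows "act g (a\<^sub>\<alpha> z) = inverse (\<alpha> g) *s a\<^sub>\<alpha> z"
proof -
  have "(\<Sum>h\<in>carrier G. \<alpha> h *s act g (act h z))
      = (\<Sum>h\<in>carrier G. inverse (\<alpha> g) *s (\<alpha> (g \<otimes> h) *s act (g \<otimes> h) z))"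
  proof (rule sum.cong)
    fix h assume h: "h \<in> carrier G"
    have "\<alpha> h = inverse (\<alpha> g) * \<alpha> (g \<otimes> h)"
      using character_mult[OF g h] character_nonzero[OF g] by simp
    then show "\<alpha> h *s act g (act h z) = inverse (\<alpha> g) *s (\<alpha> (g \<otimes> h) *s act (g \<otimes> h) z)"
      using act_mult[OF g h] by simp
  qed simp
  also have "\<dots> = inverse (\<alpha> g) *s (\<Sum>h\<in>carrier G. \<alpha> (g \<otimes> h) *s act (g \<otimes> h) z)"
    by (rule vs.scale_sum_right[symmetric])
  also have "\<dots> = inverse (\<alpha> g) *s (\<Sum>h\<in>carrier G. \<alpha> h *s act h z)"
    using grp.sum_carrier_mult_left[OF g, of "\<lambda>k. \<alpha> k *s act k z"] by simp
  finally show ?thesis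
    using g by (simp add: a_op_def act_scale act_sum mult.commute)
qed

lemma a_op_in_alpha_fix: "a\<^sub>\<alpha> z \<in> alpha_fix G scale act \<alpha>"
  using act_a_op by (simp add: alpha_fix_def)

lemma a_op_alpha_fix:
  assumes "z \<in> alpha_fix G scale act \<alpha>"
  shows "a\<^sub>\<alpha> z = z"
proof -
  have "(\<Sum>g\<in>carrier G. \<alpha> g *s act g z) = (\<Sum>g\<in>carrier G. 1 *s z)"
    using assms character_nonzero by (auto simp: alpha_fix_def intro!: sum.cong)
  also have "\<dots> = of_nat (card (carrier G)) *s z"
    using vs.scale_sum_left[of "\<lambda>_. 1" "carrier G" z] by simp
  finally show ?thesis using of_nat_card_carrier_nonzero by (simp add: a_op_def)
qed

lemma a_op_alpha_sub:
  assumes "z \<in> alpha_sub G scale act \<alpha>"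
  shows "a\<^sub>\<alpha> z = 0"
proof -
  interpret a: Vector_Spaces.linear scale scale a\<^sub>\<alpha> by (rule a_op_linear)
  let ?K = "{z. a\<^sub>\<alpha> z = 0}"
  have "vs.subspace ?K" unfolding vs.subspace_def by (simp add: a.zero a.add a.scale)
  moreover have "\<forall>g\<in>carrier G. \<forall>u\<in>?K. act g u \<in> ?K" by (simp add: a_op_act)
  moreover have "{inverse (\<alpha> g) *s z - act g z | g z. g \<in> carrier G} \<subseteq> ?K"
    by (auto simp: a.diff a.scale a_op_act)
  ultimately have "alpha_sub G scale act \<alpha> \<subseteq> ?K"
    unfolding alpha_sub_def gsubmodule_gen_def by blast
  then show ?thesis using assms by blast
qed

end

locale orbit_transversal = grp: group G + group_action G I \<phi>
  for G :: "('g, 'b) monoid_scheme" (structure) and I :: "'i set" and \<phi> +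
  fixes Istar :: "'i set" and T :: "'i \<Rightarrow> 'g set"
  assumes Istar_sub: "Istar \<subseteq> I"
    and Istar_rep: "\<And>i. i \<in> I \<Longrightarrow> \<exists>!r. r \<in> Istar \<and> i \<in> orbit G \<phi> r"
    and T_sub: "\<And>i. i \<in> Istar \<Longrightarrow> T i \<subseteq> carrier G"
    and T_transv: "\<And>i g. i \<in> Istar \<Longrightarrow> g \<in> carrier G \<Longrightarrow> \<exists>!t. t \<in> T i \<and> t \<in> g <# stabilizer G \<phi> i"
begin

lemma representative_unique:
  assumes "r \<in> Istar" "r' \<in> Istar" "g \<in> carrier G" "\<phi> g r = r'"
  shows "r = r'"
proof -
  have r'I: "r' \<in> I" using Istar_sub assms(2) by blast
  have "r' \<in> orbit G \<phi> r" using assms(3,4) unfolding orbit_def by blast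
  moreover have "r' \<in> orbit G \<phi> r'" using orbit_refl r'I .
  ultimately show ?thesis using Istar_rep[OF r'I] assms(1,2) by blast
qed

lemma transversal_inj_on:
  assumes i: "i \<in> Istar"
  shows "inj_on (\<lambda>t. \<phi> t i) (T i)"
proof (rule inj_onI)
  fix t t' assume t: "t \<in> T i" "t' \<in> T i" and eq: "\<phi> t i = \<phi> t' i"
  have iI: "i \<in> I" using i Istar_sub by blast
  have tG: "t \<in> carrier G" "t' \<in> carrier G" using T_sub[OF i] t by blast+
  interpret stab: subgroup "stabilizer G \<phi> i" G using stabilizer_subgroup[OF iI] .
  have "\<phi> (inv t \<otimes> t') i = \<phi> (inv t) (\<phi> t' i)"
    using composition_rule[OF iI] tG by simp
  also have "\<dots> = i" by (rule orbit_sym_aux[OF tG(1) iI eq])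
  finally have "inv t \<otimes> t' \<in> stabilizer G \<phi> i"
    unfolding stabilizer_def using tG by blast
  then have "t' \<in> t <# stabilizer G \<phi> i"
    using stab.lcos_module_rev[OF grp.is_group tG] by blast
  moreover have "t \<in> t <# stabilizer G \<phi> i"
    using stab.lcos_module_rev[OF grp.is_group tG(1) tG(1)] tG(1) by simp
  ultimately show "t = t'" using T_transv[OF i tG(1)] t by blast
qed

lemma exists_transversal_image:
  assumes i: "i \<in> I"
  obtains r t where "r \<in> Istar" "t \<in> T r" "\<phi> t r = i"
proof -
  obtain r where r: "r \<in> Istar" "i \<in> orbit G \<phi> r" using Istar_rep[OF i] by blast
  have rI: "r \<in> I" using r Istar_sub by blast
  obtain g where g: "g \<in> carrier G" "\<phi> g r = i" using r unfolding orbit_def by blast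
  obtain t where t: "t \<in> T r" "t \<in> g <# stabilizer G \<phi> r" using T_transv[OF r(1) g(1)] by blast
  then obtain s where s: "s \<in> stabilizer G \<phi> r" "t = g \<otimes> s" unfolding l_coset_def by blast
  have "s \<in> carrier G" "\<phi> s r = r" using s by (auto simp: stabilizer_def)
  then have "\<phi> t r = i" using s(2) g composition_rule[OF rI g(1)] by simp
  then show thesis by (rule that[OF r(1) t(1)])
qed

definition moving_pairs :: "('i \<times> 'g) set" where
  "moving_pairs = {(i, g). i \<in> Istar \<and> g \<in> T i \<and> g \<notin> stabilizer G \<phi> i}"

lemma moving_pairs_closed: "(i, g) \<in> moving_pairs \<Longrightarrow> i \<in> Istar \<and> i \<in> I \<and> g \<in> carrier G"
  using Istar_sub T_sub by (auto simp: moving_pairs_def)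

lemma inj_on_moving_pairs: "inj_on (\<lambda>(i, g). \<phi> g i) moving_pairs"
proof (rule inj_onI, clarsimp)
  fix i g i' g'
  assume ig: "(i, g) \<in> moving_pairs" "(i', g') \<in> moving_pairs" and eq: "\<phi> g i = \<phi> g' i'"
  have gG: "g \<in> carrier G" "g' \<in> carrier G" and iI: "i \<in> I" "i' \<in> I"
    and i: "i \<in> Istar" "i' \<in> Istar" and T: "g \<in> T i" "g' \<in> T i'"
    using ig Istar_sub T_sub by (auto simp: moving_pairs_def)
  have "\<phi> (inv g' \<otimes> g) i = \<phi> (inv g') (\<phi> g' i')"
    using composition_rule[OF iI(1) _ gG(1)] gG eq by simp
  also have "\<dots> = i'" using orbit_sym_aux[OF gG(2) iI(2) refl] .
  finally have "i = i'"
    using representative_unique[OF i] gG by blast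
  then show "i = i' \<and> g = g'"
    using transversal_inj_on[OF i(1)] T eq by (auto dest: inj_onD)
qed

lemma image_moving_pairs: "(\<lambda>(i, g). \<phi> g i) ` moving_pairs = I - Istar"
proof (intro equalityI subsetI)
  fix k assume "k \<in> (\<lambda>(i, g). \<phi> g i) ` moving_pairs"
  then obtain i g where ig: "(i, g) \<in> moving_pairs" "k = \<phi> g i" by auto
  then have i: "i \<in> Istar" "i \<in> I" and gG: "g \<in> carrier G" and "g \<notin> stabilizer G \<phi> i"
    using Istar_sub T_sub by (auto simp: moving_pairs_def)
  then have "k \<in> I" "k \<noteq> i" using ig element_image by (auto simp: stabilizer_def)
  then show "k \<in> I - Istar" using representative_unique[OF i(1) _ gG refl] ig(2) by auto
next
  fix k assume k: "k \<in> I - Istar"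
  then have "k \<in> I" by blast
  then obtain r t where rt: "r \<in> Istar" "t \<in> T r" "\<phi> t r = k"
    by (rule exists_transversal_image)
  then have "t \<notin> stabilizer G \<phi> r" using k by (auto simp: stabilizer_def)
  then show "k \<in> (\<lambda>(i, g). \<phi> g i) ` moving_pairs"
    using rt by (auto simp: moving_pairs_def intro: image_eqI[where x="(r, t)"])
qed

end

locale monomial_module = grp: group G + vs: vector_space scale + group_action G I \<phi>
  for G :: "('g, 'b) monoid_scheme" (structure)
    and scale :: "'k::field \<Rightarrow> 'm::ab_group_add \<Rightarrow> 'm" (infixr \<open>*s\<close> 75)
    and I :: "'i set" and \<phi> +
  fixes act :: "'g \<Rightarrow> 'm \<Rightarrow> 'm" and v :: "'i \<Rightarrow> 'm" and \<gamma> :: "'i \<Rightarrow> 'g \<Rightarrow> 'k"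
  assumes basis: "family_basis scale v I UNIV"
    and gamma_nonzero: "\<And>i g. i \<in> I \<Longrightarrow> g \<in> carrier G \<Longrightarrow> \<gamma> i g \<noteq> 0"
    and gamma_cocycle: "\<And>i g h. i \<in> I \<Longrightarrow> g \<in> carrier G \<Longrightarrow> h \<in> carrier G \<Longrightarrow>
            \<gamma> i (g \<otimes> h) = \<gamma> (\<phi> h i) g * \<gamma> i h"
    and act_linear: "\<And>g. g \<in> carrier G \<Longrightarrow> Vector_Spaces.linear scale scale (act g)"
    and act_basis: "\<And>g i. g \<in> carrier G \<Longrightarrow> i \<in> I \<Longrightarrow> act g (v i) = \<gamma> i g *s v (\<phi> g i)"
begin

lemma act_mult:
  assumes g: "g \<in> carrier G" and h: "h \<in> carrier G"
  shows "act g (act h z) = act (g \<otimes> h) z"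
proof -
  have pair: "vector_space_pair scale scale"
    by (simp add: vector_space_pair_def vs.vector_space_axioms)
  have comp: "Vector_Spaces.linear scale scale (act g \<circ> act h)"
    using act_linear[OF h] act_linear[OF g] by (rule Vector_Spaces.linear_compose)
  have gh: "Vector_Spaces.linear scale scale (act (g \<otimes> h))" using g h by (simp add: act_linear)
  have "(act g \<circ> act h) z = act (g \<otimes> h) z"
  proof (rule vector_space_pair.linear_eq_on[OF pair comp gh])
    show "z \<in> vs.span (v ` I)" using basis by (simp add: family_basis_def)
  next
    fix b assume "b \<in> v ` I"
    then obtain i where i: "i \<in> I" "b = v i" by blast
    have hi: "\<phi> h i \<in> I" using element_image h i by blast
    have "act g (act h (v i)) = \<gamma> i h *s \<gamma> (\<phi> h i) g *s v (\<phi> g (\<phi> h i))"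
      using g h i hi act_linear[OF g, unfolded linear_iff_module_hom]
      by (simp add: act_basis module_hom.scale)
    also have "\<dots> = act (g \<otimes> h) (v i)"
      using g h i by (simp add: act_basis gamma_cocycle composition_rule mult.commute)
    finally show "(act g \<circ> act h) b = act (g \<otimes> h) b" using i by simp
  qed
  then show ?thesis by simp
qed

sublocale linear_action G scale act
  by intro_locales (simp add: linear_action_axioms_def act_linear act_mult)

definition coord :: "'i \<Rightarrow> 'm \<Rightarrow> 'k" where
  "coord k z = vs.representation (v ` I) z (v k)"

lemma coord_linear: "Vector_Spaces.linear scale (*) (coord k)"
  unfolding coord_def by (rule vs.linear_representation_family_basis[OF basis])

lemma coord_v: "i \<in> I \<Longrightarrow> k \<in> I \<Longrightarrow> coord k (v i) = (if i = k then 1 else 0)"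
  unfolding coord_def by (rule vs.representation_family_basis[OF basis])

lemma coord_act_v:
  assumes "h \<in> carrier G" "j \<in> I" "k \<in> I"
  shows "coord k (act h (v j)) = (if \<phi> h j = k then \<gamma> j h else 0)"
proof -
  interpret coord: Vector_Spaces.linear scale "(*)" "coord k" by (rule coord_linear)
  have "\<phi> h j \<in> I" using element_image assms by blast
  then show ?thesis using assms by (simp add: act_basis coord.scale coord_v)
qed

end

locale monomial_character_module =
  character_action G scale act \<alpha> + monomial_module G scale I \<phi> act v \<gamma> +
  orbit_transversal G I \<phi> Istar T
  for G :: "('g, 'b) monoid_scheme" (structure)
    and scale :: "'k::field_char_0 \<Rightarrow> 'm::ab_group_add \<Rightarrow> 'm" (infixr \<open>*s\<close> 75)
    and act :: "'g \<Rightarrow> 'm \<Rightarrow> 'm" and \<alpha> :: "'g \<Rightarrow> 'k"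
    and I :: "'i set" and \<phi> :: "'g \<Rightarrow> 'i \<Rightarrow> 'i" and v :: "'i \<Rightarrow> 'm" and \<gamma> :: "'i \<Rightarrow> 'g \<Rightarrow> 'k"
    and Istar :: "'i set" and T :: "'i \<Rightarrow> 'g set"
begin

abbreviation J where "J \<equiv> Istar \<inter> I_set G I \<phi> \<gamma> \<alpha>"

lemma basis_vector_in_alpha_sub:
  assumes i: "i \<in> I" "i \<notin> I_set G I \<phi> \<gamma> \<alpha>"
  shows "v i \<in> alpha_sub G scale act \<alpha>"
proof -
  obtain h where h: "h \<in> stabilizer G \<phi> i" "\<gamma> i h \<noteq> inverse (\<alpha> h)"
    using i by (auto simp: I_set_def)
  have hG: "h \<in> carrier G" "\<phi> h i = i" using h by (auto simp: stabilizer_def)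
  let ?d = "inverse (\<alpha> h) - \<gamma> i h"
  have "?d *s v i = inverse (\<alpha> h) *s v i - act h (v i)"
    using hG i by (simp only: act_basis vs.scale_left_diff_distrib)
  then have "?d *s v i \<in> alpha_sub G scale act \<alpha>"
    using alpha_sub_generator[OF hG(1), where z="v i"] by (simp only:)
  then have "inverse ?d *s ?d *s v i \<in> alpha_sub G scale act \<alpha>"
    by (rule vs.subspace_scale[OF subspace_alpha_sub])
  moreover have "?d \<noteq> 0" using h(2) by simp
  ultimately show ?thesis by simp
qed

lemma basis_vector_diff_in_alpha_sub:
  assumes "i \<in> I" "g \<in> carrier G"
  shows "v i - (\<alpha> g * \<gamma> i g) *s v (\<phi> g i) \<in> alpha_sub G scale act \<alpha>"
proof -
  have "v i - (\<alpha> g * \<gamma> i g) *s v (\<phi> g i) = \<alpha> g *s (inverse (\<alpha> g) *s v i - act g (v i))"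
    using assms character_nonzero[OF assms(2)] by (simp add: act_basis vs.scale_right_diff_distrib)
  then show ?thesis
    using alpha_sub_generator[OF assms(2)] subspace_alpha_sub by (simp add: vs.subspace_scale)
qed

lemma coord_a_op_v:
  assumes j: "j \<in> J" and j': "j' \<in> Istar"
  shows "coord j (a\<^sub>\<alpha> (v j')) =
    (if j' = j then of_nat (card (stabilizer G \<phi> j)) / of_nat (card (carrier G)) else 0)"
proof -
  interpret coord: Vector_Spaces.linear scale "(*)" "coord j" by (rule coord_linear)
  have jI: "j \<in> I" and j'I: "j' \<in> I" using j j' Istar_sub by auto
  have summand: "\<alpha> h * coord j (act h (v j')) = (if j' = j \<and> h \<in> stabilizer G \<phi> j then 1 else 0)"
    if h: "h \<in> carrier G" for h
  proof (cases "\<phi> h j' = j")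
    case True
    then have "j' = j" using representative_unique[OF j' _ h] j by blast
    then have "h \<in> stabilizer G \<phi> j" using True h by (simp add: stabilizer_def)
    then have "\<gamma> j h = inverse (\<alpha> h)" using j by (auto simp: I_set_def)
    then show ?thesis
      using True \<open>j' = j\<close> \<open>h \<in> stabilizer G \<phi> j\<close> h jI character_nonzero[OF h]
      by (simp add: coord_act_v)
  next
    case False
    then show ?thesis using h jI j'I by (auto simp: coord_act_v stabilizer_def)
  qed
  have "coord j (a\<^sub>\<alpha> (v j')) =
      inverse (of_nat (card (carrier G))) * (\<Sum>h\<in>carrier G. \<alpha> h * coord j (act h (v j')))"
    by (simp add: a_op_def coord.scale vs.linear_functional_sum_scale[OF coord_linear])
  also have "(\<Sum>h\<in>carrier G. \<alpha> h * coord j (act h (v j'))) =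
      (\<Sum>h\<in>carrier G. if j' = j \<and> h \<in> stabilizer G \<phi> j then 1 else 0)"
    using summand by (rule sum.cong[OF refl])
  also have "\<dots> = (if j' = j then of_nat (card (stabilizer G \<phi> j)) else 0)"
    using finite_carrier stabilizer_subset by (simp add: sum.If_cases Int_absorb1)
  finally show ?thesis by (simp add: field_simps)
qed

lemma a_op_v_independent:
  assumes S: "finite S" "S \<subseteq> J" and sum: "(\<Sum>j\<in>S. c j *s a\<^sub>\<alpha> (v j)) = 0"
  shows "\<forall>j\<in>S. c j = 0"
proof
  fix j assume "j \<in> S"
  show "c j = 0"
  proof (rule vs.coefficient_eq_0_by_functional[OF coord_linear S(1) \<open>j \<in> S\<close> sum])
    have jI: "j \<in> I" using \<open>j \<in> S\<close> S Istar_sub by auto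
    have "finite (stabilizer G \<phi> j)" using finite_carrier stabilizer_subset finite_subset by blast
    moreover have "\<one> \<in> stabilizer G \<phi> j" using stabilizer_one_closed[OF jI] .
    ultimately have "card (stabilizer G \<phi> j) \<noteq> 0" by (auto simp: card_eq_0_iff)
    moreover have "j \<in> J" using \<open>j \<in> S\<close> S by blast
    ultimately show "coord j (a\<^sub>\<alpha> (v j)) \<noteq> 0"
      using coord_a_op_v Istar_sub of_nat_card_carrier_nonzero by simp
  next
    fix j' assume "j' \<in> S" "j' \<noteq> j"
    moreover have "j \<in> J" "j' \<in> Istar" using \<open>j \<in> S\<close> \<open>j' \<in> S\<close> S by blast+
    ultimately show "c j' * coord j (a\<^sub>\<alpha> (v j')) = 0"
      using coord_a_op_v by simp
  qed
qed

(* On Inl ` moving_pairs this is family (A), on Inr ` (Istar - J) family (B). *)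
definition transversal_family :: "('i \<times> 'g) + 'i \<Rightarrow> 'm" where
  "transversal_family = case_sum (\<lambda>(i, g). v i - (\<alpha> g * \<gamma> i g) *s v (\<phi> g i)) v"

lemma family_basis_transversal_family:
  "family_basis scale transversal_family (Inl ` moving_pairs \<union> Inr ` Istar) UNIV"
proof -
  have \<sigma>: "fst ` moving_pairs \<subseteq> Istar" by (auto simp: moving_pairs_def)
  have \<tau>: "bij_betw (\<lambda>(i, g). \<phi> g i) moving_pairs (I - Istar)"
    using inj_on_moving_pairs image_moving_pairs by (rule bij_betw_imageI)
  have c: "(\<lambda>(i, g). \<alpha> g * \<gamma> i g) x \<noteq> 0" if "x \<in> moving_pairs" for x
    using that moving_pairs_closed character_nonzero gamma_nonzero by (cases x) auto
  show ?thesis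
    using vs.family_basis_unitriangular[OF basis Istar_sub \<sigma> \<tau> c]
    by (simp add: transversal_family_def case_prod_beta')
qed

lemma transversal_family_in_alpha_sub:
  "transversal_family ` (Inl ` moving_pairs \<union> Inr ` (Istar - J)) \<subseteq> alpha_sub G scale act \<alpha>"
proof -
  have "transversal_family (Inl x) \<in> alpha_sub G scale act \<alpha>" if "x \<in> moving_pairs" for x
    using that moving_pairs_closed basis_vector_diff_in_alpha_sub
    by (cases x) (simp add: transversal_family_def)
  moreover have "transversal_family (Inr i) \<in> alpha_sub G scale act \<alpha>" if "i \<in> Istar - J" for i
    using that Istar_sub basis_vector_in_alpha_sub by (auto simp: transversal_family_def)
  ultimately show ?thesis by auto
qed

lemma alpha_bases:
  shows "family_basis scale transversal_family (Inl ` moving_pairs \<union> Inr ` (Istar - J))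
      (alpha_sub G scale act \<alpha>)"
    and "family_basis scale (\<lambda>j. a\<^sub>\<alpha> (v j)) J (alpha_fix G scale act \<alpha>)"
    and "family_basis_mod scale v J (alpha_sub G scale act \<alpha>)"
proof -
  let ?X\<^sub>0 = "Inl ` moving_pairs \<union> Inr ` Istar" and ?X\<^sub>1 = "Inl ` moving_pairs \<union> Inr ` (Istar - J)"
  have fam_inj: "inj_on transversal_family ?X\<^sub>0"
    and fam_indep: "vs.independent (transversal_family ` ?X\<^sub>0)"
    and fam_span: "vs.span (transversal_family ` ?X\<^sub>0) = UNIV"
    using family_basis_transversal_family unfolding family_basis_def by auto
  have "transversal_family ` ?X\<^sub>0 = transversal_family ` ?X\<^sub>1 \<union> transversal_family ` Inr ` J"
    by (subst image_Un[symmetric]) (rule arg_cong[where f="image transversal_family"], blast)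
  then have spanning: "vs.span (transversal_family ` ?X\<^sub>1 \<union> v ` J) = UNIV"
    using fam_span by (simp add: transversal_family_def image_image)
  note annihilated = vs.basis_mod_if_annihilated[OF spanning transversal_family_in_alpha_sub
      subspace_alpha_sub a_op_linear a_op_alpha_sub a_op_v_independent]
  have "?X\<^sub>1 \<subseteq> ?X\<^sub>0" by blast
  then have "inj_on transversal_family ?X\<^sub>1" "vs.independent (transversal_family ` ?X\<^sub>1)"
    using inj_on_subset[OF fam_inj] vs.independent_mono[OF fam_indep image_mono] by blast+
  then show "family_basis scale transversal_family ?X\<^sub>1 (alpha_sub G scale act \<alpha>)"
    using annihilated(1) unfolding family_basis_def by blast
  show "family_basis_mod scale v J (alpha_sub G scale act \<alpha>)"
    by (rule annihilated(2))
  show "family_basis scale (\<lambda>j. a\<^sub>\<alpha> (v j)) J (alpha_fix G scale act \<alpha>)"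
    using transversal_family_in_alpha_sub
    by (intro vs.family_basis_projection_image[OF spanning a_op_linear _ subspace_alpha_fix
        a_op_in_alpha_fix a_op_alpha_fix a_op_v_independent]) (auto intro: a_op_alpha_sub)
qed

end

theorem proposition1p2p6:
  fixes G :: "('g, 'b) monoid_scheme" (structure)
    and scale :: "'k::field_char_0 \<Rightarrow> 'm::ab_group_add \<Rightarrow> 'm"
    and act :: "'g \<Rightarrow> 'm \<Rightarrow> 'm"
    and v :: "'i \<Rightarrow> 'm"
    and I :: "'i set"
    and \<phi> :: "'g \<Rightarrow> 'i \<Rightarrow> 'i"
    and \<gamma> :: "'i \<Rightarrow> 'g \<Rightarrow> 'k"
    and \<alpha> :: "'g \<Rightarrow> 'k"
    and Istar :: "'i set"
    and T :: "'i \<Rightarrow> 'g set"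
  assumes grp: "group G" and fin: "finite (carrier G)"
    and vs: "vector_space scale"
    and char: "one_dim_char G \<alpha>"
    and basis: "family_basis scale v I UNIV"
    and action: "group_action G I \<phi>"
    and gamma_nz: "\<And>i g. i \<in> I \<Longrightarrow> g \<in> carrier G \<Longrightarrow> \<gamma> i g \<noteq> 0"
    and gamma_cocycle: "\<And>i g h. i \<in> I \<Longrightarrow> g \<in> carrier G \<Longrightarrow> h \<in> carrier G \<Longrightarrow>
            \<gamma> i (g \<otimes> h) = \<gamma> (\<phi> h i) g * \<gamma> i h"
    and act_lin: "\<And>g. g \<in> carrier G \<Longrightarrow> Vector_Spaces.linear scale scale (act g)"
    and act_basis: "\<And>g i. g \<in> carrier G \<Longrightarrow> i \<in> I \<Longrightarrow> act g (v i) = scale (\<gamma> i g) (v (\<phi> g i))"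
    and Istar_sub: "Istar \<subseteq> I"
    and Istar_rep: "\<And>i. i \<in> I \<Longrightarrow> \<exists>!r. r \<in> Istar \<and> i \<in> orbit G \<phi> r"
    and T_sub: "\<And>i. i \<in> Istar \<Longrightarrow> T i \<subseteq> carrier G"
    and T_transv: "\<And>i g. i \<in> Istar \<Longrightarrow> g \<in> carrier G \<Longrightarrow>
            \<exists>!t. t \<in> T i \<and> t \<in> g <# stabilizer G \<phi> i"
  shows
    "family_basis scale
       (\<lambda>x. case x of
              Inl (i, g) \<Rightarrow> v i - scale (\<alpha> g * \<gamma> i g) (v (\<phi> g i))
            | Inr i \<Rightarrow> v i)
       (Inl ` {(i, g). i \<in> Istar \<and> g \<in> T i \<and> g \<notin> stabilizer G \<phi> i}
        \<union> Inr ` (Istar - Istar \<inter> I_set G I \<phi> \<gamma> \<alpha>))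
       (alpha_sub G scale act \<alpha>)
     \<and> family_basis scale (\<lambda>j. a_op G scale act \<alpha> (v j))
         (Istar \<inter> I_set G I \<phi> \<gamma> \<alpha>) (alpha_fix G scale act \<alpha>)
     \<and> family_basis_mod scale v (Istar \<inter> I_set G I \<phi> \<gamma> \<alpha>) (alpha_sub G scale act \<alpha>)"
proof -
  interpret M: monomial_module G scale I \<phi> act v \<gamma>
    using assms by (simp add: monomial_module_def monomial_module_axioms_def)
  interpret monomial_character_module G scale act \<alpha> I \<phi> v \<gamma> Istar T
    using assms M.act_mult M.monomial_module_axioms
    by (simp add: monomial_character_module_def character_action_def
        character_action_axioms_def linear_action_def linear_action_axioms_def
        orbit_transversal_def orbit_transversal_axioms_def)
  show ?thesis
    using alpha_bases unfolding transversal_family_def moving_pairs_def by blast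
qed

end
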